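(* For every $U>0$, $\mu\in\mathbb{R}$, $T\ge0$, the functional $\mathcal{F}$ is bounded from below on $\mathcal{D}$.
   Context: Let $\mathbb{T}^3=[-\pi,\pi]^3$ with periodic identification and normalized Haar measure $dp$. Let $\varepsilon(p)=4\sum_{k=1}^3\sin^2(p_k/2)$. $\mathcal{D}=\{(\gamma,\alpha,\rho_0): \gamma\in L^1(\mathbb{T}^3),\ \gamma\ge0,\ \alpha^2\le\gamma(1+\gamma)\text{ a.e.},\ \rho_0\ge0\}$. With $\beta=\sqrt{(\tfrac12+\gamma)^2-\alpha^2}$, $S(\gamma,\alpha)=\int\big[(\beta+\tfrac12)\ln(\beta+\tfrac12)-(\beta-\tfrac12)\ln(\beta-\tfrac12)\big]dp$, and $\mathcal{F}(\gamma,\alpha,\rho_0)=\int(\varepsilon-\mu)\gamma\,dp-\mu\rho_0-TS(\gamma,\alpha)+\frac U2(\int\alpha)^2+U(\int\gamma)^2+U\rho_0\int\alpha+2U\rho_0\int\gamma+\frac U2\rho_0^2$ (integrals over $\mathbb{T}^3$). *)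

theory Defs
  imports "HOL-Analysis.Analysis"
begin

text \<open>The torus T^3 = [-pi,pi]^3 (periodic identification; the boundary is a null set)
 with normalized Haar measure (2 pi)^(-3) times Lebesgue measure.\<close>
definition torus :: "(real ^ 3) measure" where
  "torus = scale_measure (ennreal (1 / (2 * pi) ^ 3))
            (restrict_space lborel (cbox (\<chi> k. - pi) (\<chi> k. pi)))"

definition disp :: "real ^ 3 \<Rightarrow> real" where
  "disp p = 4 * (\<Sum>k\<in>UNIV. (sin (p $ k / 2))\<^sup>2)"

definition domD :: "((real ^ 3 \<Rightarrow> real) \<times> (real ^ 3 \<Rightarrow> real) \<times> real) set" where
  "domD = {(\<gamma>, \<alpha>, \<rho>0). integrable torus \<gamma> \<and> \<alpha> \<in> borel_measurable torus \<and>
              (AE p in torus. \<gamma> p \<ge> 0) \<and>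
              (AE p in torus. (\<alpha> p)\<^sup>2 \<le> \<gamma> p * (1 + \<gamma> p)) \<and> \<rho>0 \<ge> 0}"

definition betaf :: "(real ^ 3 \<Rightarrow> real) \<Rightarrow> (real ^ 3 \<Rightarrow> real) \<Rightarrow> real ^ 3 \<Rightarrow> real" where
  "betaf \<gamma> \<alpha> p = sqrt ((1/2 + \<gamma> p)\<^sup>2 - (\<alpha> p)\<^sup>2)"

definition entropy :: "(real ^ 3 \<Rightarrow> real) \<Rightarrow> (real ^ 3 \<Rightarrow> real) \<Rightarrow> real" where
  "entropy \<gamma> \<alpha> = (\<integral>p. (let b = betaf \<gamma> \<alpha> p in
       (b + 1/2) * ln (b + 1/2) - (b - 1/2) * ln (b - 1/2)) \<partial>torus)"

definition freeF :: "real \<Rightarrow> real \<Rightarrow> real \<Rightarrow>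
    (real ^ 3 \<Rightarrow> real) \<Rightarrow> (real ^ 3 \<Rightarrow> real) \<Rightarrow> real \<Rightarrow> real" where
  "freeF U \<mu> T \<gamma> \<alpha> \<rho>0 =
     (\<integral>p. (disp p - \<mu>) * \<gamma> p \<partial>torus) - \<mu> * \<rho>0 - T * entropy \<gamma> \<alpha>
     + U / 2 * (\<integral>p. \<alpha> p \<partial>torus)\<^sup>2 + U * (\<integral>p. \<gamma> p \<partial>torus)\<^sup>2
     + U * \<rho>0 * (\<integral>p. \<alpha> p \<partial>torus) + 2 * U * \<rho>0 * (\<integral>p. \<gamma> p \<partial>torus)
     + U / 2 * \<rho>0\<^sup>2"

end

theory Submission
  imports Defs
begin

text \<open>Pointwise, \<open>\<alpha>\<^sup>2 \<le> \<gamma> (1 + \<gamma>)\<close> gives \<open>\<bar>\<alpha>\<bar> \<le> \<gamma> + 1/2\<close> and \<open>1/2 \<le> \<beta> \<le> \<gamma> + 1/2\<close>, and the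
  entropy density \<open>(\<beta> + 1/2) ln (\<beta> + 1/2) - (\<beta> - 1/2) ln (\<beta> - 1/2)\<close> is at most \<open>\<beta> + 1/2\<close>.
  Integrating over the torus, a probability space, yields \<open>\<bar>\<integral>\<alpha>\<bar> \<le> G + 1/2\<close> and \<open>S \<le> G + 1\<close>
  for \<open>G = \<integral>\<gamma> \<ge> 0\<close>, while the kinetic term is at least \<open>-\<bar>\<mu>\<bar> G\<close>. Hence the functional
  dominates \<open>U G\<^sup>2 - (\<bar>\<mu>\<bar> + T) G + U/2 \<rho>\<^sub>0\<^sup>2 - (\<bar>\<mu>\<bar> + U/2) \<rho>\<^sub>0 - T\<close>, which is bounded
  from below because \<open>U > 0\<close>.\<close>

lemma measure_lborel_torus_box:
  "measure lborel (cbox (\<chi> k. - pi) (\<chi> k. pi) :: (real ^ 3) set) = (2 * pi) ^ 3"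
  by (simp add: content_cbox_cart interval_ne_empty_cart)

lemma finite_measure_torus: "finite_measure torus"
  using emeasure_lborel_cbox_finite[of "\<chi> k. - pi" "\<chi> k. pi :: real ^ 3"]
  unfolding torus_def
  by (intro finite_measureI) (simp add: space_scale_measure emeasure_restrict_space
      ennreal_mult_eq_top_iff less_top)

lemma measure_torus_space: "measure torus (space torus) = 1"
  unfolding torus_def
  by (simp add: space_scale_measure measure_restrict_space measure_lborel_torus_box)

lemma (in finite_measure) integral_le_integral_add_const:
  fixes f g :: "'a \<Rightarrow> real"
  assumes "integrable M g" "AE x in M. 0 \<le> g x" "0 \<le> c" "AE x in M. f x \<le> g x + c"
  shows "(\<integral>x. f x \<partial>M) \<le> (\<integral>x. g x \<partial>M) + c * measure M (space M)"
proof -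
  have "(\<integral>x. f x \<partial>M) \<le> (\<integral>x. g x + c \<partial>M)"
    using assms by (intro integral_mono_AE') auto
  also have "\<dots> = (\<integral>x. g x \<partial>M) + c * measure M (space M)"
    using assms(1) by simp
  finally show ?thesis .
qed

lemma integral_torus_le_integral_add_const:
  fixes f g :: "real ^ 3 \<Rightarrow> real"
  assumes "integrable torus g" "AE p in torus. 0 \<le> g p" "0 \<le> c"
    "AE p in torus. f p \<le> g p + c"
  shows "(\<integral>p. f p \<partial>torus) \<le> (\<integral>p. g p \<partial>torus) + c"
  using finite_measure.integral_le_integral_add_const[OF finite_measure_torus assms]
  by (simp add: measure_torus_space)

lemma abs_le_add_half_if_sq_le:
  fixes a g :: real
  assumes "a\<^sup>2 \<le> g * (1 + g)" and "0 \<le> g"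
  shows "\<bar>a\<bar> \<le> g + 1/2"
proof -
  have "a\<^sup>2 \<le> (g + 1/2)\<^sup>2"
    using assms(1) by (simp add: power2_eq_square algebra_simps)
  then show ?thesis
    using assms(2) abs_le_square_iff[of a "g + 1/2"] by simp
qed

lemma betaf_bounds:
  assumes "(\<alpha> p)\<^sup>2 \<le> \<gamma> p * (1 + \<gamma> p)" and "0 \<le> \<gamma> p"
  shows "1/2 \<le> betaf \<gamma> \<alpha> p" and "betaf \<gamma> \<alpha> p \<le> \<gamma> p + 1/2"
proof -
  have "1/4 \<le> (1/2 + \<gamma> p)\<^sup>2 - (\<alpha> p)\<^sup>2"
    using assms(1) by (simp add: power2_eq_square algebra_simps)
  then have "sqrt (1/4) \<le> betaf \<gamma> \<alpha> p"
    unfolding betaf_def by (rule real_sqrt_le_mono)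
  then show "1/2 \<le> betaf \<gamma> \<alpha> p"
    by (simp add: real_sqrt_divide)
  have "betaf \<gamma> \<alpha> p \<le> sqrt ((1/2 + \<gamma> p)\<^sup>2)"
    unfolding betaf_def by (rule real_sqrt_le_mono) simp
  then show "betaf \<gamma> \<alpha> p \<le> \<gamma> p + 1/2"
    using assms(2) by simp
qed

lemma entropy_density_le:
  fixes b :: real
  assumes "1/2 \<le> b"
  shows "(b + 1/2) * ln (b + 1/2) - (b - 1/2) * ln (b - 1/2) \<le> b + 1/2"
proof -
  define x where "x = b - 1/2"
  have x: "0 \<le> x" and b: "b + 1/2 = x + 1" "b - 1/2 = x"
    using assms unfolding x_def by auto
  have ln_le: "ln (x + 1) \<le> x"
    using x ln_le_minus_one[of "x + 1"] by simp
  have "x * (ln (x + 1) - ln x) \<le> 1"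
  proof (cases "x = 0")
    case False
    then have "ln ((x + 1) / x) \<le> 1 / x"
      using x ln_le_minus_one[of "(x + 1) / x"] by (simp add: field_simps)
    then have "ln (x + 1) - ln x \<le> 1 / x"
      using x False by (simp add: ln_div)
    then show ?thesis
      using x False by (simp add: field_simps)
  qed simp
  then have "(x + 1) * ln (x + 1) - x * ln x \<le> x + 1"
    using ln_le by (simp add: algebra_simps)
  then show ?thesis
    unfolding b .
qed

lemma domD_D:
  assumes "(\<gamma>, \<alpha>, \<rho>0) \<in> domD"
  shows "integrable torus \<gamma>" and "AE p in torus. 0 \<le> \<gamma> p"
    and "AE p in torus. (\<alpha> p)\<^sup>2 \<le> \<gamma> p * (1 + \<gamma> p)" and "0 \<le> \<rho>0"
  using assms unfolding domD_def by auto

lemma domD_integral_nonneg: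
  assumes "(\<gamma>, \<alpha>, \<rho>0) \<in> domD"
  shows "0 \<le> (\<integral>p. \<gamma> p \<partial>torus)"
  using domD_D(2)[OF assms] by (rule integral_nonneg_AE)

lemma domD_abs_integral_le:
  assumes "(\<gamma>, \<alpha>, \<rho>0) \<in> domD"
  shows "\<bar>\<integral>p. \<alpha> p \<partial>torus\<bar> \<le> (\<integral>p. \<gamma> p \<partial>torus) + 1/2"
proof -
  have "\<bar>\<integral>p. \<alpha> p \<partial>torus\<bar> \<le> (\<integral>p. \<bar>\<alpha> p\<bar> \<partial>torus)"
    using integral_norm_bound[of torus \<alpha>] by simp
  also have "\<dots> \<le> (\<integral>p. \<gamma> p \<partial>torus) + 1/2"
  proof (rule integral_torus_le_integral_add_const)
    show "AE p in torus. \<bar>\<alpha> p\<bar> \<le> \<gamma> p + 1/2"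
      using domD_D(3,2)[OF assms] by eventually_elim (rule abs_le_add_half_if_sq_le)
  qed (use domD_D[OF assms] in auto)
  finally show ?thesis .
qed

lemma domD_integral_kinetic_ge:
  assumes "(\<gamma>, \<alpha>, \<rho>0) \<in> domD"
  shows "- \<bar>\<mu>\<bar> * (\<integral>p. \<gamma> p \<partial>torus) \<le> (\<integral>p. (disp p - \<mu>) * \<gamma> p \<partial>torus)"
proof -
  note int = domD_D(1)[OF assms] and pos = domD_D(2)[OF assms]
  have disp: "0 \<le> disp p" for p
    unfolding disp_def by (simp add: sum_nonneg)
  have "AE p in torus. - ((disp p - \<mu>) * \<gamma> p) \<le> \<bar>\<mu>\<bar> * \<gamma> p"
    using pos
  proof eventually_elim
    case (elim p)
    have "\<mu> * \<gamma> p \<le> \<bar>\<mu>\<bar> * \<gamma> p" and "0 \<le> disp p * \<gamma> p"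
      using elim disp[of p] by (simp_all add: mult_right_mono)
    then show ?case
      by (simp add: algebra_simps)
  qed
  then have "(\<integral>p. - ((disp p - \<mu>) * \<gamma> p) \<partial>torus) \<le> (\<integral>p. \<bar>\<mu>\<bar> * \<gamma> p \<partial>torus)"
    using int pos by (intro integral_mono_AE') auto
  then show ?thesis
    by simp
qed

lemma domD_entropy_le:
  assumes "(\<gamma>, \<alpha>, \<rho>0) \<in> domD"
  shows "entropy \<gamma> \<alpha> \<le> (\<integral>p. \<gamma> p \<partial>torus) + 1"
proof -
  have "AE p in torus. (let b = betaf \<gamma> \<alpha> p in
      (b + 1/2) * ln (b + 1/2) - (b - 1/2) * ln (b - 1/2)) \<le> \<gamma> p + 1"
    using domD_D(3,2)[OF assms]
  proof eventually_elim
    case (elim p)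
    then have "1/2 \<le> betaf \<gamma> \<alpha> p" "betaf \<gamma> \<alpha> p \<le> \<gamma> p + 1/2"
      by (rule betaf_bounds)+
    then show ?case
      using entropy_density_le[of "betaf \<gamma> \<alpha> p"] by (simp add: Let_def)
  qed
  then show ?thesis
    unfolding entropy_def using domD_D[OF assms] by (intro integral_torus_le_integral_add_const) auto
qed

lemma freeF_ge_quadratic:
  assumes "(\<gamma>, \<alpha>, \<rho>0) \<in> domD" and "0 < U" and "0 \<le> T"
  defines "G \<equiv> \<integral>p. \<gamma> p \<partial>torus"
  shows "(U * G\<^sup>2 - (\<bar>\<mu>\<bar> + T) * G) + (U / 2 * \<rho>0\<^sup>2 - (\<bar>\<mu>\<bar> + U / 2) * \<rho>0) - T
    \<le> freeF U \<mu> T \<gamma> \<alpha> \<rho>0"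
proof -
  define A where "A = (\<integral>p. \<alpha> p \<partial>torus)"
  have \<rho>0: "0 \<le> \<rho>0"
    using domD_D(4)[OF assms(1)] .
  have G: "0 \<le> G"
    unfolding G_def using assms(1) by (rule domD_integral_nonneg)
  have "- (U * \<rho>0) * (G + 1/2) \<le> U * \<rho>0 * A"
  proof -
    have "- A \<le> G + 1/2"
      using domD_abs_integral_le[OF assms(1)] unfolding A_def G_def by linarith
    then have "U * \<rho>0 * - A \<le> U * \<rho>0 * (G + 1/2)"
      using assms(2) \<rho>0 by (intro mult_left_mono) auto
    then show ?thesis
      by simp
  qed
  moreover have "- T * (G + 1) \<le> - T * entropy \<gamma> \<alpha>"
    using domD_entropy_le[OF assms(1)] assms(3) unfolding G_def by (simp add: mult_left_mono)
  moreover have "- \<bar>\<mu>\<bar> * \<rho>0 \<le> - \<mu> * \<rho>0"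
    using \<rho>0 by (simp add: mult_right_mono)
  moreover have "0 \<le> U / 2 * A\<^sup>2" and "0 \<le> U * \<rho>0 * G"
    using assms(2) \<rho>0 G by simp_all
  ultimately show ?thesis
    using domD_integral_kinetic_ge[OF assms(1), of \<mu>]
    unfolding freeF_def A_def G_def by (simp add: algebra_simps)
qed

lemma quadratic_lower_bound:
  fixes a b x :: real
  assumes "0 < a"
  shows "- b\<^sup>2 / (4 * a) \<le> a * x\<^sup>2 + b * x"
proof -
  have "0 \<le> (2 * a * x + b)\<^sup>2"
    by simp
  then have "0 \<le> 4 * a * (a * x\<^sup>2 + b * x) + b\<^sup>2"
    by (simp add: power2_eq_square algebra_simps)
  then show ?thesis
    using assms by (simp add: field_simps)
qed

theorem proposition3p1:
  fixes U \<mu> T :: real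
  assumes "U > 0" and "T \<ge> 0"
  shows "\<exists>C. \<forall>(\<gamma>, \<alpha>, \<rho>0) \<in> domD. freeF U \<mu> T \<gamma> \<alpha> \<rho>0 \<ge> C"
proof -
  define b\<^sub>1 where "b\<^sub>1 = \<bar>\<mu>\<bar> + T"
  define b\<^sub>2 where "b\<^sub>2 = \<bar>\<mu>\<bar> + U / 2"
  have "- b\<^sub>1\<^sup>2 / (4 * U) - b\<^sub>2\<^sup>2 / (2 * U) - T \<le> freeF U \<mu> T \<gamma> \<alpha> \<rho>0"
    if "(\<gamma>, \<alpha>, \<rho>0) \<in> domD" for \<gamma> \<alpha> \<rho>0
  proof -
    let ?G = "\<integral>p. \<gamma> p \<partial>torus"
    have "- b\<^sub>1\<^sup>2 / (4 * U) \<le> U * ?G\<^sup>2 - b\<^sub>1 * ?G"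
      using quadratic_lower_bound[OF assms(1), of "- b\<^sub>1" ?G] by simp
    moreover have "- b\<^sub>2\<^sup>2 / (2 * U) \<le> U / 2 * \<rho>0\<^sup>2 - b\<^sub>2 * \<rho>0"
      using quadratic_lower_bound[of "U / 2" "- b\<^sub>2" \<rho>0] assms(1) by simp
    ultimately show ?thesis
      using freeF_ge_quadratic[OF that assms, of \<mu>] unfolding b\<^sub>1_def b\<^sub>2_def by linarith
  qed
  then show ?thesis
    by blast
qed

end
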